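(* Let $n,f,\ell,p$ be positive integers with $f$ even, $n=pf$ and $\ell+3\le f/2$. Let $\mathcal{C}_1\subseteq\{0,1\}^{f/2}$ be the set of binary sequences $\mathbf{a}=(a_1,\dots,a_{f/2})$ that begin with $0^\ell1$, end with $1$, and such that $(a_{\ell+1},\dots,a_{f/2})$ does not contain $0^\ell$ as a substring. Let $\mathcal{C}_2\subseteq\{0,1\}^{f/2}$ be the set of binary sequences of length $f/2$ that end with $1$, contain $01^\ell0$ as a substring, and do not contain $0^\ell$ as a substring. Let $\mathcal{C}=\{\mathbf{a}_1\mathbf{a}_2\cdots\mathbf{a}_{2p}:\mathbf{a}_1\in\mathcal{C}_1,\ \mathbf{a}_2,\dots,\mathbf{a}_{2p}\in\mathcal{C}_2\}\subseteq\{0,1\}^n$ (concatenation). Then $\mathcal{C}$ is an MU code and $\mathcal{C}$ is an $f$-APD code.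
   Context: $0^\ell$ denotes $\ell$ zeros, $1^\ell$ denotes $\ell$ ones; a substring is a block of consecutive entries. For $\mathbf{a}=(a_1,\dots,a_n)$ write $\mathbf{a}_i^j=(a_i,\dots,a_j)$ if $i\le j$ and $(a_i,a_{i-1},\dots,a_j)$ if $i>j$; $\bar{\mathbf{a}}$ is the bitwise complement. A code $\mathcal{C}\subseteq\{0,1\}^n$ is MU (mutually uncorrelated) if for all not necessarily distinct $\mathbf{a},\mathbf{b}\in\mathcal{C}$ and all $1\le l<n$, $\mathbf{a}_1^l\ne\mathbf{b}_{n-l+1}^n$. It is $f$-APD if for all not necessarily distinct $\mathbf{a},\mathbf{b}\in\mathcal{C}$ and all $1\le i,j\le n+1-f$, $\bar{\mathbf{a}}_i^{f+i-1}\ne\mathbf{b}_j^{f+j-1}$ and $\bar{\mathbf{a}}_i^{f+i-1}\ne\mathbf{b}_{f+j-1}^{j}$. *)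

theory Defs
  imports Main "HOL-Library.Sublist"
begin

text \<open>Binary sequences are modelled as bool lists: False = 0, True = 1.
  Entry a_i (1-indexed in the paper) is a ! (i - 1). "Substring" = contiguous
  sublist (HOL-Library.Sublist.sublist).\<close>

definition bcompl :: "bool list \<Rightarrow> bool list" where
  "bcompl a = map Not a"

text \<open>a_i^{i+f-1} (1-indexed i) is the window of length f starting at position i.\<close>
definition window :: "bool list \<Rightarrow> nat \<Rightarrow> nat \<Rightarrow> bool list" where
  "window a i f = take f (drop (i - 1) a)"

definition MU_code :: "nat \<Rightarrow> bool list set \<Rightarrow> bool" where
  "MU_code n C \<longleftrightarrow> (\<forall>a \<in> C. length a = n) \<and>
     (\<forall>a \<in> C. \<forall>b \<in> C. \<forall>l. 1 \<le> l \<and> l < n \<longrightarrow> take l a \<noteq> drop (n - l) b)"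

definition APD_code :: "nat \<Rightarrow> nat \<Rightarrow> bool list set \<Rightarrow> bool" where
  "APD_code n f C \<longleftrightarrow> (\<forall>a \<in> C. length a = n) \<and>
     (\<forall>a \<in> C. \<forall>b \<in> C. \<forall>i j. 1 \<le> i \<and> i \<le> n + 1 - f \<and> 1 \<le> j \<and> j \<le> n + 1 - f \<longrightarrow>
        bcompl (window a i f) \<noteq> window b j f \<and>
        bcompl (window a i f) \<noteq> rev (window b j f))"

definition code1 :: "nat \<Rightarrow> nat \<Rightarrow> bool list set" where
  "code1 f l = {a. length a = f div 2 \<and> prefix (replicate l False @ [True]) a \<and>
     suffix [True] a \<and> \<not> sublist (replicate l False) (drop l a)}"

definition code2 :: "nat \<Rightarrow> nat \<Rightarrow> bool list set" where
  "code2 f l = {a. length a = f div 2 \<and> suffix [True] a \<and>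
     sublist ([False] @ replicate l True @ [False]) a \<and> \<not> sublist (replicate l False) a}"

definition codeC :: "nat \<Rightarrow> nat \<Rightarrow> nat \<Rightarrow> bool list set" where
  "codeC f l p = {concat (a1 # as) | a1 as. a1 \<in> code1 f l \<and> length as = 2 * p - 1 \<and>
     set as \<subseteq> code2 f l}"

end

theory Submission
  imports Defs
begin

text \<open>Blocks end in 1 and avoid 0^l, so no run of l zeros can straddle a block boundary: every
  codeword is 0^l followed by a word starting with 1 that avoids 0^l, i.e. 0^l occurs in a
  codeword only as its prefix, and every codeword ends in 1. An overlap of length at most l
  between a prefix and a suffix would end in 0; a longer one would put 0^l at a nonzero position.
  Any window of length f covers a whole block from C2, hence contains 01^l0, whose complement
  10^l1 is a palindrome that occurs in no codeword.\<close>

lemma suffix_singleton_iff: "suffix [x] xs \<longleftrightarrow> xs \<noteq> [] \<and> last xs = x"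
  by (metis append_butlast_last_id last_snoc snoc_eq_iff_butlast suffix_def)

lemma sublist_replicate_across:
  assumes "y \<noteq> x" "sublist (replicate l x) (ys @ y # zs)"
  shows "sublist (replicate l x) ys \<or> sublist (replicate l x) zs"
proof -
  have y_notin: "y \<notin> set (replicate l x)"
    using assms(1) by simp
  consider "sublist (replicate l x) ys" | "sublist (replicate l x) (y # zs)"
    | xs1 xs2 where "replicate l x = xs1 @ xs2" "suffix xs1 ys" "prefix xs2 (y # zs)"
    using assms(2) unfolding sublist_append by blast
  then show ?thesis
  proof cases
    case 2
    then show ?thesis
      using assms(1) by (cases l) (auto simp: sublist_Cons_right prefix_Cons)
  next
    case (3 xs1 xs2)
    then show ?thesis
      using y_notin by (cases xs2) (auto simp: suffix_imp_sublist dest: set_mono_prefix)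
  qed simp
qed

lemma not_sublist_replicate_concat:
  assumes "y \<noteq> x" "l > 0" "\<forall>b \<in> set bs. suffix [y] b \<and> \<not> sublist (replicate l x) b"
  shows "\<not> sublist (replicate l x) (concat bs)"
  using assms(3)
proof (induction bs)
  case (Cons b bs)
  then obtain b' where b: "b = b' @ [y]" "\<not> sublist (replicate l x) b"
    by (auto simp: suffix_def)
  have "\<not> sublist (replicate l x) b'"
    using b sublist_order.order.trans[OF _ sublist_append_rightI] by blast
  then show ?case
    using Cons sublist_replicate_across[OF assms(1), of l b' "concat bs"] b(1) by auto
qed (use assms(2) in simp)

lemma suffix_concat_last:
  assumes "bs \<noteq> []" "suffix ys (last bs)"
  shows "suffix ys (concat bs)"
proof -
  have "concat bs = concat (butlast bs) @ last bs"
    using assms(1) by (metis append_butlast_last_id concat_append concat.simps append_Nil2)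
  then show ?thesis
    using assms(2) by (metis suffix_appendI)
qed

lemma length_concat_uniform:
  "\<forall>b \<in> set bs. length b = m \<Longrightarrow> length (concat bs) = length bs * m"
  by (induction bs) auto

lemma replicate_sublist_only_at_start:
  assumes "\<not> sublist (replicate l x) (y # w)" "y \<noteq> x" "l > 0"
    "replicate l x @ y # w = xs @ replicate l x @ ys"
  shows "xs = []"
proof (rule ccontr)
  assume "xs \<noteq> []"
  show False
  proof (cases "l \<le> length xs")
    case True
    then have "y # w = drop l xs @ replicate l x @ ys"
      using assms(4) by (simp add: append_eq_append_conv_if)
    then show False
      using assms(1) by (metis sublist_appendI)
  next
    case False
    have "(replicate l x @ y # w) ! l = y"
      by (simp add: nth_append)
    moreover have "(xs @ replicate l x @ ys) ! l = x"
      using False \<open>xs \<noteq> []\<close> by (simp add: nth_append)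
    ultimately show False
      using assms(2,4) by simp
  qed
qed

lemma sublist_window: "sublist (window a i f) a"
  unfolding window_def by (rule sublist_order.order.trans[OF sublist_take sublist_drop])

lemma sublist_take_drop:
  assumes "i \<le> length u" "length u + length v \<le> i + f"
  shows "sublist v (take f (drop i (u @ v @ w)))"
proof -
  have "take f (drop i (u @ v @ w)) = drop i u @ v @ take (f - length (drop i u @ v)) w"
    using assms by (simp add: take_append)
  then show ?thesis
    by (metis sublist_appendI)
qed

lemma window_contains_block:
  assumes "\<forall>b \<in> set bs. length b = m" "m > 0" "i + 2 * m \<le> length (concat bs)"
  shows "\<exists>k. 0 < k \<and> k < length bs \<and> sublist (bs ! k) (take (2 * m) (drop i (concat bs)))"
proof -
  define k where "k = i div m + 1"
  have "k * m = i div m * m + m" "i div m * m + i mod m = i" "i mod m < m"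
    using assms(2) by (simp_all add: k_def)
  then have k_bounds: "i < k * m" "k * m \<le> i + m"
    by linarith+
  then have "(k + 1) * m \<le> length bs * m"
    using assms(3) length_concat_uniform[OF assms(1)] by simp
  then have "k + 1 \<le> length bs"
    using assms(2) by (meson mult_le_cancel2)
  then have k: "0 < k" "k < length bs"
    unfolding k_def by auto
  then have "concat bs = concat (take k bs) @ bs ! k @ concat (drop (Suc k) bs)"
    by (metis append_take_drop_id concat.simps(2) concat_append Cons_nth_drop_Suc)
  moreover have "length (concat (take k bs)) = k * m"
    using length_concat_uniform[of "take k bs" m] assms(1) k by (auto dest: in_set_takeD)
  moreover have "length (bs ! k) = m"
    using assms(1) k by simp
  ultimately have "sublist (bs ! k) (take (2 * m) (drop i (concat bs)))"
    using sublist_take_drop k_bounds by (metis less_imp_le add_le_mono1 mult_2 add.assoc)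
  then show ?thesis
    using k by blast
qed

lemma codeC_starts_with_zeros:
  assumes "c \<in> codeC f l p" "l > 0"
  obtains w where "c = replicate l False @ True # w" "\<not> sublist (replicate l False) (True # w)"
proof -
  obtain a1 as where c: "c = concat (a1 # as)" "a1 \<in> code1 f l" "set as \<subseteq> code2 f l"
    using assms(1) unfolding codeC_def by blast
  then obtain r where a1: "a1 = replicate l False @ True # r"
    unfolding code1_def prefix_def by auto
  have "suffix [True] (True # r)" "\<not> sublist (replicate l False) (True # r)"
    using c(2) a1 by (simp_all add: code1_def suffix_singleton_iff)
  then have "\<forall>b \<in> set ((True # r) # as). suffix [True] b \<and> \<not> sublist (replicate l False) b"
    using c(3) by (auto simp: code2_def)
  then have "\<not> sublist (replicate l False) (concat ((True # r) # as))"
    using not_sublist_replicate_concat[of True False l "(True # r) # as"] assms(2) by simp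
  then show ?thesis
    using that[of "r @ concat as"] c(1) a1 by simp
qed

lemma codeC_ends_True:
  assumes "c \<in> codeC f l p"
  shows "suffix [True] c"
proof -
  obtain a1 as where c: "c = concat (a1 # as)" "a1 \<in> code1 f l" "set as \<subseteq> code2 f l"
    using assms unfolding codeC_def by blast
  then have "suffix [True] (last (a1 # as))"
    using last_in_set[of "a1 # as"] by (auto simp: code1_def code2_def)
  then show ?thesis
    using c(1) suffix_concat_last by blast
qed

lemma length_codeC:
  assumes "c \<in> codeC f l p" "p > 0"
  shows "length c = 2 * p * (f div 2)"
proof -
  obtain a1 as where c: "c = concat (a1 # as)" "a1 \<in> code1 f l" "length as = 2 * p - 1"
    "set as \<subseteq> code2 f l"
    using assms(1) unfolding codeC_def by blast
  then have "\<forall>b \<in> set (a1 # as). length b = f div 2"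
    by (auto simp: code1_def code2_def)
  then have "length (concat (a1 # as)) = length (a1 # as) * (f div 2)"
    by (rule length_concat_uniform)
  then show ?thesis
    using c(1,3) assms(2) by simp
qed

lemma codeC_zeros_only_prefix:
  assumes "c \<in> codeC f l p" "l > 0" "c = xs @ replicate l False @ ys"
  shows "xs = []"
proof -
  obtain w where "c = replicate l False @ True # w" "\<not> sublist (replicate l False) (True # w)"
    using codeC_starts_with_zeros assms(1,2) .
  then show ?thesis
    using replicate_sublist_only_at_start assms(2,3) by (metis (full_types))
qed

lemma codeC_no_marker:
  assumes "c \<in> codeC f l p" "l > 0"
  shows "\<not> sublist ([True] @ replicate l False @ [True]) c"
proof
  assume "sublist ([True] @ replicate l False @ [True]) c"
  then obtain xs ys where "c = (xs @ [True]) @ replicate l False @ True # ys"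
    unfolding sublist_def by auto
  then show False
    using codeC_zeros_only_prefix[OF assms] by blast
qed

lemma MU_codeC:
  assumes "l > 0" "p > 0" "even f"
  shows "MU_code (p * f) (codeC f l p)"
  unfolding MU_code_def
proof (intro conjI ballI allI impI)
  fix a assume "a \<in> codeC f l p"
  then show "length a = p * f"
    using length_codeC assms(2,3) by simp
next
  fix a b k assume a: "a \<in> codeC f l p" and b: "b \<in> codeC f l p" and k: "1 \<le> k \<and> k < p * f"
  obtain w where w: "a = replicate l False @ True # w"
    using codeC_starts_with_zeros[OF a assms(1)] .
  have len_b: "length b = p * f"
    using length_codeC[OF b assms(2)] assms(3) by simp
  show "take k a \<noteq> drop (p * f - k) b"
  proof
    assume eq: "take k a = drop (p * f - k) b"
    show False
    proof (cases "k \<le> l")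
      case True
      then have "drop (p * f - k) b = replicate k False"
        using eq w by (simp add: min_def)
      moreover have "last (drop (p * f - k) b) = True"
        using codeC_ends_True[OF b] len_b k by (simp add: suffix_singleton_iff less_diff_conv2)
      ultimately show False
        using k by simp
    next
      case False
      then have "drop (p * f - k) b = replicate l False @ take (k - l) (True # w)"
        using eq w by simp
      then have "b = take (p * f - k) b @ replicate l False @ take (k - l) (True # w)"
        by (metis append_take_drop_id)
      then have "take (p * f - k) b = []"
        using codeC_zeros_only_prefix[OF b assms(1)] by blast
      moreover have "length (take (p * f - k) b) = p * f - k"
        using len_b by simp
      ultimately show False
        using k by simp
    qed
  qed
qed

lemma codeC_window_contains_pattern:
  assumes "a \<in> codeC f l p" "p > 0" "even f" "f > 0" "1 \<le> i" "i + f \<le> p * f + 1"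
  shows "sublist ([False] @ replicate l True @ [False]) (window a i f)"
proof -
  define m where "m = f div 2"
  obtain a1 as where c: "a = concat (a1 # as)" "a1 \<in> code1 f l" "length as = 2 * p - 1"
    "set as \<subseteq> code2 f l"
    using assms(1) unfolding codeC_def by blast
  have lengths: "\<forall>b \<in> set (a1 # as). length b = m"
    using c(2,4) by (auto simp: code1_def code2_def m_def)
  have "f = 2 * m" "m > 0"
    using assms(3,4) by (auto simp: m_def)
  moreover have "length a = p * f"
    using length_codeC[OF assms(1,2)] assms(3) by simp
  ultimately have "i - 1 + 2 * m \<le> length (concat (a1 # as))"
    using assms(5,6) c(1) by simp
  then obtain k where k: "0 < k" "k < length (a1 # as)"
    "sublist ((a1 # as) ! k) (take (2 * m) (drop (i - 1) (concat (a1 # as))))"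
    using window_contains_block[OF lengths \<open>m > 0\<close>] by blast
  have "(a1 # as) ! k \<in> code2 f l"
    using k(1,2) c(4) by (auto simp: nth_Cons' subset_iff)
  then have "sublist ([False] @ replicate l True @ [False]) ((a1 # as) ! k)"
    by (simp add: code2_def)
  then show ?thesis
    using k(3) c(1) \<open>f = 2 * m\<close> unfolding window_def
    by (metis sublist_order.order.trans)
qed

lemma APD_codeC:
  assumes "l > 0" "p > 0" "even f" "f > 0"
  shows "APD_code (p * f) f (codeC f l p)"
  unfolding APD_code_def
proof (intro conjI ballI allI impI)
  fix a assume "a \<in> codeC f l p"
  then show "length a = p * f"
    using length_codeC assms(2,3) by simp
next
  fix a b i j assume a: "a \<in> codeC f l p" and b: "b \<in> codeC f l p"
    and ij: "1 \<le> i \<and> i \<le> p * f + 1 - f \<and> 1 \<le> j \<and> j \<le> p * f + 1 - f"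
  let ?marker = "[True] @ replicate l False @ [True]"
  have "f \<le> p * f"
    using assms(2) by simp
  then have "i + f \<le> p * f + 1"
    using ij by linarith
  then have "sublist (map Not ([False] @ replicate l True @ [False])) (bcompl (window a i f))"
    unfolding bcompl_def
    using map_mono_sublist codeC_window_contains_pattern[OF a assms(2-4)] ij by blast
  then have marker_a: "sublist ?marker (bcompl (window a i f))"
    by simp
  have marker_b: "\<not> sublist ?marker (window b j f)"
    using codeC_no_marker[OF b assms(1)] sublist_window sublist_order.order.trans by blast
  show "bcompl (window a i f) \<noteq> window b j f"
    using marker_a marker_b by auto
  show "bcompl (window a i f) \<noteq> rev (window b j f)"
    using marker_a marker_b by (auto simp: sublist_rev_right)
qed

theorem lemma5:
  fixes n f l p :: nat
  assumes "n > 0" "f > 0" "l > 0" "p > 0" "even f" "n = p * f" "l + 3 \<le> f div 2"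
  shows "MU_code n (codeC f l p) \<and> APD_code n f (codeC f l p)"
  using MU_codeC[OF assms(3-5)] APD_codeC[OF assms(3-5,2)] assms(6) by simp

end
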